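(* Let $f:\mathbb{R}^n\to\mathbb{R}$ be convex and $L$-smooth (i.e. $\nabla f$ is $L$-Lipschitz with respect to $\|\cdot\|_2$), and suppose $f$ attains its global minimum value $f^*$ at some point of $\mathbb{R}^n_+$; let $z\in\mathbb{R}^n_+$ be any such minimizer. Let $x_0\in\mathbb{R}^n_{++}$ and define $$\alpha_k=\min\left\{\frac{f(x_k)-f^*}{2\|\nabla f(x_k)\|^2_{x_k}},\ \frac{1.79}{\|\nabla f(x_k)\|_\infty}\right\}$$ and either $x_{k+1}=x_k\circ\exp(-\alpha_k\nabla f(x_k))$ (entropic mirror descent) or $x_{k+1}=x_k\circ(\mathbf{1}-\alpha_k\nabla f(x_k)+\alpha_k^2\nabla f(x_k)^2)$ (Hadamard descent+), with the sequence kept constant once $\nabla f(x_k)=0$. Then in both cases $(x_k)$ is bounded, $\alpha_k\ge \big(8L(D_h(z,x_0)+\|z\|_1)\big)^{-1}$, and for all $k\ge0$ $$\min_{0\le i\le k} f(x_i)-f^*\le\frac{16L\,D_h(z,x_0)\,\big(D_h(z,x_0)+\|z\|_1\big)}{k+1};$$ moreover $(x_k)$ converges to a minimizer of $f$ lying in $\mathbb{R}^n_+$.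
   Context: $\mathbb{R}^n_+$, $\mathbb{R}^n_{++}$ are the nonnegative and strictly positive orthants; $\circ$, $\exp$ and squares act componentwise; $\mathbf{1}$ the all-ones vector; $\|v\|_x^2=\sum_i x_iv_i^2$. $h(x)=\sum_i x_i(\log x_i-1)$ (with $0\log0=0$) and $D_h(x,y)=\sum_i\big(x_i\log\frac{x_i}{y_i}-x_i+y_i\big)$ for $x\in\mathbb{R}^n_+$, $y\in\mathbb{R}^n_{++}$. *)

theory Defs
  imports "HOL-Analysis.Analysis"
begin

definition wnorm2 :: "real^'n \<Rightarrow> real^'n \<Rightarrow> real" where
  "wnorm2 x v = (\<Sum>i\<in>UNIV. x$i * (v$i)^2)"

definition norm1 :: "real^'n \<Rightarrow> real" where
  "norm1 v = (\<Sum>i\<in>UNIV. \<bar>v$i\<bar>)"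

text \<open>Bregman divergence of h(x) = sum x_i (log x_i - 1), with 0 log 0 = 0.\<close>
definition Dh :: "real^'n \<Rightarrow> real^'n \<Rightarrow> real" where
  "Dh x y = (\<Sum>i\<in>UNIV. (if x$i = 0 then 0 else x$i * ln (x$i / y$i)) - x$i + y$i)"

text \<open>Step size alpha_k (meaningful when the gradient is nonzero).\<close>
definition step_size :: "real \<Rightarrow> real \<Rightarrow> real^'n \<Rightarrow> real^'n \<Rightarrow> real" where
  "step_size fx fstar x gx =
     min ((fx - fstar) / (2 * wnorm2 x gx)) (1.79 / infnorm gx)"

definition emd_update :: "real \<Rightarrow> real^'n \<Rightarrow> real^'n \<Rightarrow> real^'n" where
  "emd_update a x gx = (\<chi> i. x$i * exp (- a * gx$i))"

definition hdp_update :: "real \<Rightarrow> real^'n \<Rightarrow> real^'n \<Rightarrow> real^'n" where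
  "hdp_update a x gx = (\<chi> i. x$i * (1 - a * gx$i + a^2 * (gx$i)^2))"

end

theory Submission
  imports Defs
begin

(* Both updates behave like entropic mirror steps: since exp (-t) <= 1 - t + t^2 for
   t >= -1.79, a step of length a with a ||g||_inf <= 1.79 satisfies
   D_h(w, x') <= D_h(w, x) + a <g, w - x> + a^2 ||g||_x^2 for every w >= 0.
   Convexity and the first half of the step-size rule turn this into
   D_h(w, x_(k+1)) <= D_h(w, x_k) - a_k (f(x_k) - f^* ) / 2 for every nonnegative minimizer w.
   With w = z this bounds ||x_k||_1 by 2 (D_h(z, x0) + ||z||_1); together with
   ||grad f(x)||^2 <= 2 L (f(x) - f^* ) it bounds a_k from below, and summing the
   decrease gives the rate. A cluster point l of the bounded sequence is a nonnegative
   minimizer, so D_h(l, x_k) is nonincreasing; it tends to 0 along a subsequence,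
   hence along the whole sequence, which forces x_k --> l. *)

lemma exp_1_79_le: "exp (1.79::real) \<le> 1 + 1.79 + 1.79\<^sup>2"
  \<comment> \<open>exp 1.79 = 5.989..., against 5.994... on the right: ten Maclaurin terms are needed.\<close>
proof -
  define P where "P = (\<Sum>m<10. (1.79::real) ^ m / fact m)"
  define c where "c = (1.79::real) ^ 10 / fact 10"
  obtain t where t: "\<bar>t\<bar> \<le> \<bar>1.79::real\<bar>" and exp_eq: "exp (1.79::real) = P + exp t * c"
    using Maclaurin_exp_le[of "1.79::real" 10] unfolding P_def c_def by auto
  have "exp t * c \<le> exp 1.79 * c"
    using t by (intro mult_right_mono) (auto simp: c_def)
  then have "exp (1.79::real) * (1 - c) \<le> P"
    using exp_eq by (simp add: algebra_simps)
  also have "P \<le> (1 + 1.79 + 1.79\<^sup>2) * (1 - c)"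
    unfolding P_def c_def by (simp add: eval_nat_numeral power_divide)
  finally show ?thesis
    unfolding c_def by (simp add: eval_nat_numeral mult_le_cancel_right)
qed

lemma exp_minus_le_quadratic:
  fixes t :: real
  assumes "-1.79 \<le> t"
  shows "exp (- t) \<le> 1 - t + t\<^sup>2"
proof -
  define H where "H s = (1 - s + s\<^sup>2) * exp s" for s :: real
  have H_deriv: "(H has_real_derivative exp s * (s * (1 + s))) (at s)" for s
    unfolding H_def by (rule derivative_eq_intros refl | simp add: algebra_simps power2_eq_square)+
  \<comment> \<open>H decreases on [-1, 0] and increases elsewhere, and H (-1.79) \<ge> 1 = H 0.\<close>
  have "1 \<le> H t"
  proof (cases "t \<ge> 0")
    case True
    have "H 0 \<le> H t"
      using True by (intro deriv_nonneg_imp_mono[OF H_deriv]) auto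
    then show ?thesis by (simp add: H_def)
  next
    case False
    show ?thesis
    proof (cases "t \<ge> -1")
      case True
      have "H 0 \<le> H t"
        using True False
        by (intro deriv_nonpos_imp_antimono[OF H_deriv])
          (auto simp: mult_le_0_iff)
      then show ?thesis by (simp add: H_def)
    next
      case t_lt: False
      have "1 \<le> (1 + 1.79 + 1.79\<^sup>2) * exp (-1.79::real)"
        using exp_1_79_le by (simp add: exp_minus field_simps)
      also have "\<dots> = H (-1.79)" by (simp add: H_def)
      also have "H (-1.79) \<le> H t"
        using assms t_lt by (intro deriv_nonneg_imp_mono[OF H_deriv])
          (auto simp: zero_le_mult_iff)
      finally show ?thesis .
    qed
  qed
  then show ?thesis
    by (simp add: H_def exp_minus field_simps)
qed

lemma has_field_derivative_along_line:
  fixes f :: "'a::real_inner \<Rightarrow> real"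
  assumes "\<And>y. (f has_derivative (\<lambda>h. g y \<bullet> h)) (at y)"
  shows "((\<lambda>t. f (x + t *\<^sub>R d)) has_field_derivative g (x + t *\<^sub>R d) \<bullet> d) (at t within S)"
proof -
  have "((\<lambda>t. x + t *\<^sub>R d) has_derivative (\<lambda>h. h *\<^sub>R d)) (at t within S)"
    by (auto intro!: derivative_eq_intros)
  from has_derivative_compose[OF this assms]
  show ?thesis
    by (simp add: has_field_derivative_def mult_commute_abs)
qed

lemma convex_on_gradient_inequality:
  fixes f :: "'a::real_inner \<Rightarrow> real"
  assumes conv: "convex_on UNIV f"
    and grad: "\<And>y. (f has_derivative (\<lambda>h. g y \<bullet> h)) (at y)"
  shows "f x + g x \<bullet> (y - x) \<le> f y"
proof -
  define \<phi> where "\<phi> t = f (x + t *\<^sub>R (y - x))" for t :: real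
  have "convex_on UNIV \<phi>"
  proof (rule convex_onI)
    fix t a b :: real
    assume "0 < t" "t < 1"
    then show "\<phi> ((1 - t) *\<^sub>R a + t *\<^sub>R b) \<le> (1 - t) * \<phi> a + t * \<phi> b"
      using convex_onD[OF conv, of t "x + a *\<^sub>R (y - x)" "x + b *\<^sub>R (y - x)"]
      by (simp add: \<phi>_def algebra_simps)
  qed simp
  moreover have "(\<phi> has_field_derivative g x \<bullet> (y - x)) (at 0 within UNIV)"
    unfolding \<phi>_def using has_field_derivative_along_line[OF grad, of x "y - x" 0] by simp
  ultimately have "\<phi> 1 - \<phi> 0 \<ge> (g x \<bullet> (y - x)) * (1 - 0)"
    by (intro convex_on_imp_above_tangent) auto
  then show ?thesis by (simp add: \<phi>_def)
qed

lemma Lipschitz_gradient_upper_bound: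
  fixes f :: "'a::real_inner \<Rightarrow> real"
  assumes grad: "\<And>y. (f has_derivative (\<lambda>h. g y \<bullet> h)) (at y)"
    and smooth: "\<And>a b. norm (g a - g b) \<le> L * norm (a - b)"
  shows "f y \<le> f x + g x \<bullet> (y - x) + L / 2 * (norm (y - x))\<^sup>2"
proof -
  define d where "d = y - x"
  define \<psi> where "\<psi> t = f (x + t *\<^sub>R d) - t * (g x \<bullet> d) - L / 2 * t\<^sup>2 * (norm d)\<^sup>2" for t
  define \<psi>' where "\<psi>' t = (g (x + t *\<^sub>R d) - g x) \<bullet> d - L * t * (norm d)\<^sup>2" for t
  have "(\<psi> has_field_derivative \<psi>' t) (at t within {0..1})" for t
    unfolding \<psi>_def \<psi>'_def
    by (rule derivative_eq_intros has_field_derivative_along_line[OF grad] refl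
        | simp add: inner_diff_left)+
  then obtain \<xi> where \<xi>: "\<xi> \<in> {0..1}" and mvt: "\<psi> 1 - \<psi> 0 = \<psi>' \<xi> * (1 - 0)"
    using mvt_very_simple[of 0 1 \<psi> "\<lambda>t h. \<psi>' t * h"]
    by (fastforce simp: has_field_derivative_def)
  have "(g (x + \<xi> *\<^sub>R d) - g x) \<bullet> d \<le> norm (g (x + \<xi> *\<^sub>R d) - g x) * norm d"
    by (rule norm_cauchy_schwarz)
  also have "\<dots> \<le> L * norm (\<xi> *\<^sub>R d) * norm d"
    using smooth[of "x + \<xi> *\<^sub>R d" x] by (intro mult_right_mono) auto
  also have "\<dots> = L * \<xi> * (norm d)\<^sup>2"
    using \<xi> by (simp add: power2_eq_square)
  finally have "\<psi> 1 \<le> \<psi> 0"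
    using mvt by (simp add: \<psi>'_def)
  then show ?thesis by (simp add: \<psi>_def d_def)
qed

lemma Lipschitz_gradient_norm_le:
  fixes f :: "'a::real_inner \<Rightarrow> real"
  assumes grad: "\<And>y. (f has_derivative (\<lambda>h. g y \<bullet> h)) (at y)"
    and smooth: "\<And>a b. norm (g a - g b) \<le> L * norm (a - b)"
    and min: "\<And>y. f z \<le> f y" and "L > 0"
  shows "(norm (g y))\<^sup>2 \<le> 2 * L * (f y - f z)"
proof -
  have "f z \<le> f (y - (1 / L) *\<^sub>R g y)" by (rule min)
  also have "\<dots> \<le> f y - (1 / L) * (norm (g y))\<^sup>2 + L / 2 * ((1 / L) * norm (g y))\<^sup>2"
    using Lipschitz_gradient_upper_bound[OF grad smooth, of "y - (1 / L) *\<^sub>R g y" y] \<open>L > 0\<close>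
    by (simp add: power2_norm_eq_inner)
  also have "\<dots> = f y - (norm (g y))\<^sup>2 / (2 * L)"
    using \<open>L > 0\<close> by (simp add: power2_eq_square field_simps)
  finally show ?thesis
    using \<open>L > 0\<close> by (simp add: field_simps)
qed

definition kl_div :: "real \<Rightarrow> real \<Rightarrow> real" where
  "kl_div a b = (if a = 0 then 0 else a * ln (a / b)) - a + b"

lemma Dh_eq_sum_kl_div: "Dh x y = (\<Sum>i\<in>UNIV. kl_div (x$i) (y$i))"
  by (simp add: Dh_def kl_div_def)

lemma sqrt_diff_sq_le_kl_div:
  assumes "0 \<le> a" "0 < b"
  shows "(sqrt b - sqrt a)\<^sup>2 \<le> kl_div a b"
proof (cases "a = 0")
  case True
  then show ?thesis using assms by (simp add: kl_div_def)
next
  case False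
  with assms have a: "0 < a" by simp
  have "ln (sqrt (b / a)) \<le> sqrt (b / a) - 1"
    using a assms by (intro ln_le_minus_one) auto
  moreover have "ln (a / b) = - 2 * ln (sqrt (b / a))"
    using a assms by (simp add: ln_sqrt ln_div)
  moreover have "a * sqrt (b / a) = sqrt a * sqrt b"
    using a assms by (simp add: real_sqrt_divide field_simps)
  ultimately have "a * (2 - 2 * sqrt (b / a)) \<le> a * ln (a / b)"
    using a by (intro mult_left_mono) auto
  then have "2 * a - 2 * (sqrt a * sqrt b) \<le> a * ln (a / b)"
    using \<open>a * sqrt (b / a) = sqrt a * sqrt b\<close> by (simp add: right_diff_distrib)
  moreover have "(sqrt b - sqrt a)\<^sup>2 = b - 2 * (sqrt a * sqrt b) + a"
    using a assms by (simp add: power2_diff)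
  ultimately show ?thesis
    using False by (simp add: kl_div_def)
qed

lemma kl_div_nonneg: "0 \<le> a \<Longrightarrow> 0 < b \<Longrightarrow> 0 \<le> kl_div a b"
  by (metis sqrt_diff_sq_le_kl_div order_trans zero_le_power2)

lemma le_twice_kl_div_add:
  assumes "0 \<le> a" "0 < b"
  shows "b \<le> 2 * (kl_div a b + a)"
proof -
  have "b = (sqrt b - sqrt a)\<^sup>2 + a + 2 * sqrt a * (sqrt b - sqrt a)"
    using assms by (simp add: power2_eq_square algebra_simps)
  also have "\<dots> \<le> 2 * ((sqrt b - sqrt a)\<^sup>2 + a)"
    using sum_squares_bound[of "sqrt a" "sqrt b - sqrt a"] assms
    by (simp add: power2_eq_square algebra_simps)
  also have "\<dots> \<le> 2 * (kl_div a b + a)"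
    using sqrt_diff_sq_le_kl_div[OF assms] by simp
  finally show ?thesis .
qed

lemma kl_div_mult_le:
  assumes "0 \<le> a" "0 < b" "0 < m" "- ln m \<le> t" "m \<le> 1 - t + t\<^sup>2"
  shows "kl_div a (b * m) \<le> kl_div a b + a * t + b * (t\<^sup>2 - t)"
proof -
  have "b * m \<le> b * (1 - t + t\<^sup>2)"
    using assms by (intro mult_left_mono) auto
  moreover have "a * ln (a / (b * m)) \<le> a * ln (a / b) + a * t" if "a > 0"
  proof -
    have "ln (a / (b * m)) = ln (a / b) - ln m"
      using that assms by (simp add: ln_div ln_mult)
    then have "a * ln (a / (b * m)) = a * ln (a / b) - a * ln m"
      by (simp add: right_diff_distrib)
    then show ?thesis
      using mult_left_mono[OF \<open>- ln m \<le> t\<close> \<open>0 \<le> a\<close>] by simp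
  qed
  ultimately show ?thesis
    using assms by (auto simp: kl_div_def algebra_simps)
qed

lemma tendsto_kl_div_self:
  assumes "X \<longlonglongrightarrow> a" "0 \<le> a"
  shows "(\<lambda>j. kl_div a (X j)) \<longlonglongrightarrow> 0"
proof (cases "a = 0")
  case True
  then show ?thesis using assms by (simp add: kl_div_def)
next
  case False
  have "(\<lambda>j. a * ln (a / X j) - a + X j) \<longlonglongrightarrow> a * ln (a / a) - a + a"
    using False assms by (intro tendsto_intros) auto
  then show ?thesis using False by (simp add: kl_div_def)
qed

lemma Dh_nonneg:
  fixes w y :: "real^'n"
  assumes "\<And>i. 0 \<le> w$i" "\<And>i. 0 < y$i"
  shows "0 \<le> Dh w y"
  unfolding Dh_eq_sum_kl_div by (intro sum_nonneg kl_div_nonneg assms)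

lemma sqrt_diff_sq_le_Dh:
  fixes w y :: "real^'n"
  assumes "\<And>i. 0 \<le> w$i" "\<And>i. 0 < y$i"
  shows "(sqrt (y$i) - sqrt (w$i))\<^sup>2 \<le> Dh w y"
proof -
  have "(sqrt (y$i) - sqrt (w$i))\<^sup>2 \<le> kl_div (w$i) (y$i)"
    by (intro sqrt_diff_sq_le_kl_div assms)
  also have "\<dots> \<le> Dh w y"
    unfolding Dh_eq_sum_kl_div by (intro member_le_sum kl_div_nonneg assms) auto
  finally show ?thesis .
qed

lemma norm1_le_Dh:
  fixes w y :: "real^'n"
  assumes "\<And>i. 0 \<le> w$i" "\<And>i. 0 < y$i"
  shows "norm1 y \<le> 2 * (Dh w y + norm1 w)"
proof -
  have "norm1 y = (\<Sum>i\<in>UNIV. y$i)"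
    unfolding norm1_def using assms(2) by (intro sum.cong) (auto simp: less_imp_le)
  also have "\<dots> \<le> (\<Sum>i\<in>UNIV. 2 * (kl_div (w$i) (y$i) + w$i))"
    by (intro sum_mono le_twice_kl_div_add assms)
  also have "\<dots> = 2 * (Dh w y + norm1 w)"
    using assms(1) by (simp add: Dh_eq_sum_kl_div norm1_def sum_distrib_left sum.distrib)
  finally show ?thesis .
qed

lemma Dh_mult_le:
  fixes x z G :: "real^'n" and m :: "'n \<Rightarrow> real"
  assumes "\<And>i. 0 \<le> z$i" "\<And>i. 0 < x$i" "\<And>i. 0 < m i"
    and "\<And>i. - ln (m i) \<le> a * G$i" "\<And>i. m i \<le> 1 - a * G$i + (a * G$i)\<^sup>2"
  shows "Dh z (\<chi> i. x$i * m i) \<le> Dh z x + a * (G \<bullet> (z - x)) + a\<^sup>2 * wnorm2 x G"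
proof -
  have "Dh z (\<chi> i. x$i * m i) \<le>
      (\<Sum>i\<in>UNIV. kl_div (z$i) (x$i) + z$i * (a * G$i) + x$i * ((a * G$i)\<^sup>2 - a * G$i))"
    unfolding Dh_eq_sum_kl_div by (auto intro!: sum_mono kl_div_mult_le assms)
  also have "\<dots> = (\<Sum>i\<in>UNIV. kl_div (z$i) (x$i) + a * (G$i * (z - x)$i) + a\<^sup>2 * (x$i * (G$i)\<^sup>2))"
    by (intro sum.cong) (auto simp: algebra_simps power2_eq_square)
  also have "\<dots> = Dh z x + a * (G \<bullet> (z - x)) + a\<^sup>2 * wnorm2 x G"
    by (simp add: Dh_eq_sum_kl_div wnorm2_def inner_vec_def sum.distrib sum_distrib_left)
  finally show ?thesis .
qed

lemma tendsto_Dh_self: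
  fixes y :: "nat \<Rightarrow> real^'n"
  assumes "y \<longlonglongrightarrow> l" "\<And>i. 0 \<le> l$i"
  shows "(\<lambda>j. Dh l (y j)) \<longlonglongrightarrow> 0"
  unfolding Dh_eq_sum_kl_div
  by (intro tendsto_null_sum tendsto_kl_div_self tendsto_vec_nth assms)

lemma tendsto_if_Dh_tendsto_zero:
  fixes x :: "nat \<Rightarrow> real^'n"
  assumes D: "(\<lambda>k. Dh l (x k)) \<longlonglongrightarrow> 0" and l: "\<And>i. 0 \<le> l$i" and x: "\<And>k i. 0 < x k $ i"
  shows "x \<longlonglongrightarrow> l"
proof (rule vec_tendstoI)
  fix i
  have "(\<lambda>k. sqrt (x k $ i) - sqrt (l$i)) \<longlonglongrightarrow> 0"
  proof (rule Lim_null_comparison)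
    have "\<bar>sqrt (x k $ i) - sqrt (l$i)\<bar> \<le> sqrt (Dh l (x k))" for k
      using real_sqrt_le_mono[OF sqrt_diff_sq_le_Dh[OF l x]] by simp
    then show "\<forall>\<^sub>F k in sequentially. norm (sqrt (x k $ i) - sqrt (l$i)) \<le> sqrt (Dh l (x k))"
      by simp
    show "(\<lambda>k. sqrt (Dh l (x k))) \<longlonglongrightarrow> 0"
      using tendsto_real_sqrt[OF D] by simp
  qed
  then have "(\<lambda>k. (sqrt (x k $ i))\<^sup>2) \<longlonglongrightarrow> (sqrt (l$i))\<^sup>2"
    by (intro tendsto_power) (simp add: LIM_zero_iff)
  then show "((\<lambda>k. x k $ i) \<longlongrightarrow> l $ i) sequentially"
    using x l by (simp add: less_imp_le)
qed

lemma Dh_Fejer_convergent: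
  fixes x :: "nat \<Rightarrow> real^'n"
  assumes "bounded (range x)" and pos: "\<And>k i. 0 < x k $ i"
    and cluster: "\<And>l r. strict_mono r \<Longrightarrow> (x \<circ> r) \<longlonglongrightarrow> l \<Longrightarrow> l \<in> S"
    and Fejer: "\<And>w. w \<in> S \<Longrightarrow> \<forall>i. 0 \<le> w$i \<Longrightarrow> decseq (\<lambda>k. Dh w (x k))"
  shows "\<exists>l\<in>S. x \<longlonglongrightarrow> l \<and> (\<forall>i. 0 \<le> l$i)"
proof -
  obtain l r where r: "strict_mono r" and lim: "(x \<circ> r) \<longlonglongrightarrow> l"
    using bounded_imp_convergent_subsequence[OF \<open>bounded (range x)\<close>] by blast
  have l: "0 \<le> l$i" for i
    using pos by (intro LIMSEQ_le_const[OF tendsto_vec_nth[OF lim]]) (auto simp: less_imp_le)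
  have "l \<in> S" by (rule cluster[OF r lim])
  obtain D where D: "(\<lambda>k. Dh l (x k)) \<longlonglongrightarrow> D"
    using decseq_convergent[OF Fejer[OF \<open>l \<in> S\<close>], of 0] Dh_nonneg[OF l pos] l by blast
  have "(\<lambda>j. Dh l (x (r j))) \<longlonglongrightarrow> D"
    using LIMSEQ_subseq_LIMSEQ[OF D r] by (simp add: comp_def)
  moreover have "(\<lambda>j. Dh l (x (r j))) \<longlonglongrightarrow> 0"
    using tendsto_Dh_self[OF lim l] by (simp add: comp_def)
  ultimately have "D = 0" by (rule LIMSEQ_unique)
  then have "x \<longlonglongrightarrow> l"
    using tendsto_if_Dh_tendsto_zero[OF _ l pos] D by simp
  then show ?thesis using \<open>l \<in> S\<close> l by blast
qed

text \<open>The only property of the two updates that the analysis uses: positivity and the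
  one-step Bregman inequality of an entropic mirror step.\<close>

definition admissible_update :: "(real \<Rightarrow> real^'n \<Rightarrow> real^'n \<Rightarrow> real^'n) \<Rightarrow> bool" where
  "admissible_update upd \<longleftrightarrow>
    (\<forall>a y G. (\<forall>i. 0 < y$i) \<and> 0 \<le> a \<and> a * infnorm G \<le> 1.79 \<longrightarrow>
      (\<forall>i. 0 < upd a y G $ i) \<and>
      (\<forall>w. (\<forall>i. 0 \<le> w$i) \<longrightarrow>
        Dh w (upd a y G) \<le> Dh w y + a * (G \<bullet> (w - y)) + a\<^sup>2 * wnorm2 y G))"

lemma admissible_updateI:
  assumes "\<And>a y G i. \<forall>i. 0 < y$i \<Longrightarrow> 0 \<le> a \<Longrightarrow> a * infnorm G \<le> 1.79 \<Longrightarrow>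
      0 < upd a y G $ i"
    and "\<And>a y G w. \<forall>i. 0 < y$i \<Longrightarrow> 0 \<le> a \<Longrightarrow> a * infnorm G \<le> 1.79 \<Longrightarrow> \<forall>i. 0 \<le> w$i \<Longrightarrow>
      Dh w (upd a y G) \<le> Dh w y + a * (G \<bullet> (w - y)) + a\<^sup>2 * wnorm2 y G"
  shows "admissible_update upd"
  using assms unfolding admissible_update_def by blast

lemma admissible_updateD:
  assumes "admissible_update upd" "\<And>i. 0 < y$i" "0 \<le> a" "a * infnorm G \<le> 1.79"
  shows "0 < upd a y G $ i"
    and "(\<And>i. 0 \<le> w$i) \<Longrightarrow> Dh w (upd a y G) \<le> Dh w y + a * (G \<bullet> (w - y)) + a\<^sup>2 * wnorm2 y G"
  using assms unfolding admissible_update_def by blast+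

lemma scaled_component_ge:
  fixes G :: "real^'n"
  assumes "0 \<le> a" "a * infnorm G \<le> 1.79"
  shows "-1.79 \<le> a * G$i"
proof -
  have "a * \<bar>G$i\<bar> \<le> a * infnorm G"
    using assms(1) by (intro mult_left_mono component_le_infnorm_cart)
  moreover have "a * - \<bar>G$i\<bar> \<le> a * G$i"
    using assms(1) by (intro mult_left_mono) simp
  ultimately show ?thesis
    using assms(2) by simp
qed

lemma admissible_emd_update: "admissible_update emd_update"
proof (rule admissible_updateI)
  fix a :: real and y G w :: "real^'n"
  assume y: "\<forall>i. 0 < y $ i" and a: "0 \<le> a" "a * infnorm G \<le> 1.79" and w: "\<forall>i. 0 \<le> w $ i"
  have exp_le: "exp (- a * G$i) \<le> 1 - a * G$i + (a * G$i)\<^sup>2" for i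
    using exp_minus_le_quadratic[OF scaled_component_ge[OF a]] by simp
  show "Dh w (emd_update a y G) \<le> Dh w y + a * (G \<bullet> (w - y)) + a\<^sup>2 * wnorm2 y G"
    unfolding emd_update_def by (rule Dh_mult_le) (use y w exp_le in auto)
qed (simp add: emd_update_def)

lemma admissible_hdp_update: "admissible_update hdp_update"
proof -
  have pos: "0 < 1 - s + s\<^sup>2" for s :: real
    using zero_le_power2[of "s - 1/2"] by (simp add: power2_eq_square algebra_simps)
  have ln_ge: "- ln (1 - s + s\<^sup>2) \<le> s" if "-1.79 \<le> s" for s :: real
  proof -
    have "- s \<le> ln (1 - s + s\<^sup>2)"
      using exp_minus_le_quadratic[OF that] pos[of s] by (simp add: ln_ge_iff)
    then show ?thesis by linarith
  qed
  have hdp: "hdp_update a y G = (\<chi> i. y$i * (1 - a * G$i + (a * G$i)\<^sup>2))" for a and y G :: "real^'n"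
    by (simp add: hdp_update_def power_mult_distrib)
  show ?thesis
  proof (rule admissible_updateI)
    fix a :: real and y G w :: "real^'n"
    assume y: "\<forall>i. 0 < y $ i" and a: "0 \<le> a" "a * infnorm G \<le> 1.79" and w: "\<forall>i. 0 \<le> w $ i"
    show "Dh w (hdp_update a y G) \<le> Dh w y + a * (G \<bullet> (w - y)) + a\<^sup>2 * wnorm2 y G"
      unfolding hdp by (rule Dh_mult_le) (use y w pos ln_ge[OF scaled_component_ge[OF a]] in auto)
  qed (use pos in \<open>simp add: hdp\<close>)
qed

lemma norm_le_norm1: "norm v \<le> norm1 v"
  unfolding norm1_def by (rule norm_le_l1_cart)

lemma wnorm2_pos:
  fixes y G :: "real^'n"
  assumes "\<And>i. 0 < y$i" "G \<noteq> 0"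
  shows "0 < wnorm2 y G"
proof -
  obtain i where "G$i \<noteq> 0"
    using assms(2) by (metis vec_eq_iff zero_index)
  then have "0 < y$i * (G$i)\<^sup>2" using assms(1) by simp
  then show ?thesis
    unfolding wnorm2_def using assms(1) by (intro sum_pos2[of UNIV i]) (auto simp: less_imp_le)
qed

lemma wnorm2_le_norm1:
  fixes y G :: "real^'n"
  assumes "\<And>i. 0 \<le> y$i"
  shows "wnorm2 y G \<le> norm1 y * (norm G)\<^sup>2"
proof -
  have "(G$i)\<^sup>2 \<le> (norm G)\<^sup>2" for i
    using component_le_norm_cart[of G i] by (simp add: abs_le_square_iff[symmetric])
  then have "wnorm2 y G \<le> (\<Sum>i\<in>UNIV. y$i * (norm G)\<^sup>2)"
    unfolding wnorm2_def using assms by (intro sum_mono mult_left_mono)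
  also have "\<dots> = norm1 y * (norm G)\<^sup>2"
    unfolding norm1_def sum_distrib_right using assms by simp
  finally show ?thesis .
qed

lemma wnorm2_nonneg: "(\<And>i. 0 \<le> y$i) \<Longrightarrow> 0 \<le> wnorm2 y G"
  unfolding wnorm2_def by (intro sum_nonneg) simp

text \<open>For G = 0 both quotients in step_size are 0 (division by zero), so the next three
  lemmas need no hypothesis on G.\<close>

lemma step_size_nonneg:
  assumes "fstar \<le> fx" "\<And>i. 0 \<le> x$i"
  shows "0 \<le> step_size fx fstar x G"
  using assms wnorm2_nonneg[of x G] infnorm_pos_le[of G] by (simp add: step_size_def)

lemma step_size_wnorm2_le:
  assumes "fstar \<le> fx" "\<And>i. 0 \<le> x$i"
  shows "step_size fx fstar x G * wnorm2 x G \<le> (fx - fstar) / 2"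
proof (cases "wnorm2 x G = 0")
  case False
  then have "0 < wnorm2 x G"
    using wnorm2_nonneg[of x G, OF assms(2)] by simp
  moreover have "step_size fx fstar x G \<le> (fx - fstar) / (2 * wnorm2 x G)"
    by (simp add: step_size_def)
  ultimately show ?thesis
    by (simp add: pos_le_divide_eq mult.commute mult.left_commute)
qed (use assms in simp)

lemma step_size_infnorm_le: "step_size fx fstar x G * infnorm G \<le> 1.79"
proof (cases "infnorm G = 0")
  case False
  then have "0 < infnorm G"
    using infnorm_pos_le[of G] by linarith
  moreover have "step_size fx fstar x G \<le> 1.79 / infnorm G"
    by (simp add: step_size_def)
  ultimately show ?thesis
    by (simp add: pos_le_divide_eq)
qed simp

lemma step_size_ge:
  fixes x G :: "real^'n"
  assumes "0 < L" "0 < R" "G \<noteq> 0" "\<And>i. 0 < x$i"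
    and gap: "(norm G)\<^sup>2 \<le> 2 * L * (fx - fstar)"
    and x: "norm1 x \<le> 2 * R" and G: "infnorm G \<le> 3 * L * R"
  shows "1 / (8 * L * R) \<le> step_size fx fstar x G"
proof -
  have n: "0 < (norm G)\<^sup>2" using assms(3) by simp
  have W: "0 < wnorm2 x G" by (rule wnorm2_pos[OF assms(4,3)])
  have "wnorm2 x G \<le> norm1 x * (norm G)\<^sup>2"
    using assms(4) by (intro wnorm2_le_norm1 less_imp_le)
  also have "\<dots> \<le> 2 * R * (norm G)\<^sup>2"
    using x by (intro mult_right_mono) auto
  finally have "1 / (8 * L * R) \<le> ((norm G)\<^sup>2 / (2 * L)) / (2 * wnorm2 x G)"
    using assms(1,2) n W by (simp add: field_simps)
  also have "\<dots> \<le> (fx - fstar) / (2 * wnorm2 x G)"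
    using assms(1) W gap by (intro divide_right_mono) (auto simp: field_simps)
  finally have "1 / (8 * L * R) \<le> (fx - fstar) / (2 * wnorm2 x G)" .
  moreover have "0 < infnorm G"
    using assms(3) infnorm_pos_lt by blast
  then have "1 / (8 * L * R) \<le> 1.79 / infnorm G"
    using assms(1,2) G by (simp add: field_simps)
  ultimately show ?thesis
    by (simp add: step_size_def)
qed

locale entropic_descent =
  fixes f :: "real^'n \<Rightarrow> real" and g :: "real^'n \<Rightarrow> real^'n" and L :: real
    and z :: "real^'n" and upd :: "real \<Rightarrow> real^'n \<Rightarrow> real^'n \<Rightarrow> real^'n"
    and x :: "nat \<Rightarrow> real^'n"
  assumes conv: "convex_on UNIV f"
    and grad: "\<And>y. (f has_derivative (\<lambda>h. g y \<bullet> h)) (at y)"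
    and smooth: "\<And>a b. norm (g a - g b) \<le> L * norm (a - b)"
    and z_nonneg: "\<And>i. 0 \<le> z$i"
    and z_min: "\<And>y. f z \<le> f y"
    and x0_pos: "\<And>i. 0 < x 0 $ i"
    and admissible: "admissible_update upd"
    and iter: "\<And>k. x (Suc k) = (if g (x k) = 0 then x k
      else upd (step_size (f (x k)) (f z) (x k) (g (x k))) (x k) (g (x k)))"
begin

abbreviation \<alpha> :: "nat \<Rightarrow> real" where
  "\<alpha> k \<equiv> step_size (f (x k)) (f z) (x k) (g (x k))"

abbreviation R :: real where
  "R \<equiv> Dh z (x 0) + norm1 z"

lemma grad_at_min: "g z = 0"
proof -
  have "(\<lambda>h. g z \<bullet> h) = (\<lambda>h. 0)"
    using has_derivative_local_min[OF grad] z_min by (simp add: always_eventually)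
  then show ?thesis
    by (metis inner_eq_zero_iff)
qed

lemma min_if_grad_zero: "g y = 0 \<Longrightarrow> f y = f z"
  using convex_on_gradient_inequality[OF conv grad, of y z] z_min[of y] by simp

lemma L_nonneg: "0 \<le> L"
proof -
  have "0 \<le> L * norm (axis undefined 1 - (0::real^'n))"
    using norm_ge_zero smooth by (rule order_trans)
  then show ?thesis by simp
qed

lemma L_pos_if_grad_nonzero:
  assumes "g y \<noteq> 0"
  shows "0 < L"
proof -
  have "0 < norm (g y - g z)"
    using assms grad_at_min by simp
  also have "\<dots> \<le> L * norm (y - z)" by (rule smooth)
  finally show ?thesis
    using L_nonneg by (simp add: zero_less_mult_iff)
qed

lemma step_size_iterate_bounds:
  assumes "\<And>i. 0 \<le> x k $ i"
  shows "0 \<le> \<alpha> k" "\<alpha> k * infnorm (g (x k)) \<le> 1.79"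
    "\<alpha> k * wnorm2 (x k) (g (x k)) \<le> (f (x k) - f z) / 2"
  by (rule step_size_nonneg[OF z_min assms] step_size_infnorm_le step_size_wnorm2_le[OF z_min assms])+

lemma iterates_pos: "0 < x k $ i"
proof (induction k arbitrary: i)
  case 0
  show ?case by (rule x0_pos)
next
  case (Suc k)
  then have "0 < upd (\<alpha> k) (x k) (g (x k)) $ i"
    using admissible_updateD(1)[OF admissible] step_size_iterate_bounds[of k] by (simp add: less_imp_le)
  then show ?case
    using Suc iter[of k] by simp
qed

lemma Dh_iterate_Suc_le:
  assumes w: "\<And>i. 0 \<le> w$i" and "f w = f z"
  shows "Dh w (x (Suc k)) \<le> Dh w (x k) - \<alpha> k * (f (x k) - f z) / 2"
proof (cases "g (x k) = 0")
  case True
  then show ?thesis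
    using iter[of k] min_if_grad_zero by simp
next
  case False
  let ?y = "x k" and ?G = "g (x k)"
  have a: "0 \<le> \<alpha> k" "\<alpha> k * infnorm ?G \<le> 1.79" "\<alpha> k * wnorm2 ?y ?G \<le> (f ?y - f z) / 2"
    using step_size_iterate_bounds[of k] iterates_pos by (auto simp: less_imp_le)
  have "Dh w (x (Suc k)) \<le> Dh w ?y + \<alpha> k * (?G \<bullet> (w - ?y)) + \<alpha> k * (\<alpha> k * wnorm2 ?y ?G)"
    using admissible_updateD(2)[OF admissible iterates_pos[of k] a(1,2) w] False iter[of k]
    by (simp add: power2_eq_square)
  also have "\<alpha> k * (?G \<bullet> (w - ?y)) \<le> \<alpha> k * (f z - f ?y)"
    using convex_on_gradient_inequality[OF conv grad, of ?y w] \<open>f w = f z\<close> a(1)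
    by (intro mult_left_mono) auto
  also have "\<alpha> k * (\<alpha> k * wnorm2 ?y ?G) \<le> \<alpha> k * ((f ?y - f z) / 2)"
    using a by (intro mult_left_mono)
  finally show ?thesis
    by (simp add: field_simps)
qed

lemma progress_nonneg: "0 \<le> \<alpha> k * (f (x k) - f z) / 2"
  using step_size_iterate_bounds(1)[of k] iterates_pos z_min[of "x k"] by (simp add: less_imp_le)

lemma Dh_iterate_plus_progress_le:
  "Dh z (x k) + (\<Sum>i<k. \<alpha> i * (f (x i) - f z) / 2) \<le> Dh z (x 0)"
proof (induction k)
  case (Suc k)
  then show ?case
    using Dh_iterate_Suc_le[OF z_nonneg refl, of k] by simp
qed simp

lemma norm1_iterate_le: "norm1 (x k) \<le> 2 * R"
proof -
  have "0 \<le> (\<Sum>i<k. \<alpha> i * (f (x i) - f z) / 2)"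
    by (intro sum_nonneg progress_nonneg)
  then have "Dh z (x k) \<le> Dh z (x 0)"
    using Dh_iterate_plus_progress_le[of k] by linarith
  moreover have "norm1 (x k) \<le> 2 * (Dh z (x k) + norm1 z)"
    by (rule norm1_le_Dh[OF z_nonneg iterates_pos])
  ultimately show ?thesis by simp
qed

lemma bounded_iterates: "bounded (range x)"
proof (rule boundedI)
  fix y
  assume "y \<in> range x"
  then obtain k where "y = x k" by blast
  then show "norm y \<le> 2 * R"
    using norm_le_norm1[of y] norm1_iterate_le[of k] by simp
qed

lemma R_pos: "0 < R"
proof -
  have "0 < norm1 (x 0)"
    unfolding norm1_def using x0_pos by (intro sum_pos) (auto simp: less_imp_le)
  then show ?thesis
    using norm1_iterate_le[of 0] by simp
qed

lemma step_size_lower_bound: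
  assumes "g (x k) \<noteq> 0"
  shows "1 / (8 * L * R) \<le> \<alpha> k"
proof (rule step_size_ge[OF L_pos_if_grad_nonzero[OF assms] R_pos assms iterates_pos])
  show "(norm (g (x k)))\<^sup>2 \<le> 2 * L * (f (x k) - f z)"
    by (rule Lipschitz_gradient_norm_le[OF grad smooth z_min L_pos_if_grad_nonzero[OF assms]])
  show "norm1 (x k) \<le> 2 * R" by (rule norm1_iterate_le)
  have "norm1 z \<le> R"
    using Dh_nonneg[OF z_nonneg x0_pos] by simp
  have "infnorm (g (x k)) \<le> norm (g (x k) - g z)"
    using infnorm_le_norm grad_at_min by simp
  also have "\<dots> \<le> L * norm (x k - z)" by (rule smooth)
  also have "\<dots> \<le> L * (norm1 (x k) + norm1 z)"
    using L_nonneg norm_triangle_ineq4[of "x k" z] norm_le_norm1[of "x k"] norm_le_norm1[of z]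
    by (intro mult_left_mono) auto
  also have "\<dots> \<le> L * (3 * R)"
    using L_nonneg norm1_iterate_le[of k] \<open>norm1 z \<le> R\<close> by (intro mult_left_mono) auto
  finally show "infnorm (g (x k)) \<le> 3 * L * R"
    by (simp add: algebra_simps)
qed

lemma suboptimality_sum_le: "(\<Sum>i\<le>k. f (x i) - f z) \<le> 16 * L * Dh z (x 0) * R"
proof (cases "L = 0")
  case True
  then have "f (x i) = f z" for i
    using L_pos_if_grad_nonzero min_if_grad_zero by blast
  then show ?thesis using True by simp
next
  case False
  define c where "c = 1 / (8 * L * R)"
  have c: "0 < c"
    using False L_nonneg R_pos by (simp add: c_def)
  have c_le: "c * (f (x i) - f z) \<le> \<alpha> i * (f (x i) - f z)" for i
  proof (cases "g (x i) = 0")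
    case True
    then show ?thesis using min_if_grad_zero by simp
  next
    case False
    then show ?thesis
      unfolding c_def using step_size_lower_bound[OF False] z_min[of "x i"]
      by (intro mult_right_mono) auto
  qed
  have "c / 2 * (\<Sum>i\<le>k. f (x i) - f z) = (\<Sum>i\<le>k. c * (f (x i) - f z) / 2)"
    by (simp add: sum_distrib_left)
  also have "\<dots> \<le> (\<Sum>i<Suc k. \<alpha> i * (f (x i) - f z) / 2)"
    unfolding lessThan_Suc_atMost by (intro sum_mono) (simp add: c_le)
  also have "\<dots> \<le> Dh z (x 0)"
    using Dh_iterate_plus_progress_le[of "Suc k"] Dh_nonneg[OF z_nonneg iterates_pos[of "Suc k"]]
    by linarith
  finally show ?thesis
    using c False L_nonneg R_pos by (simp add: c_def field_simps)
qed

lemma min_suboptimality_le: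
  "Min ((\<lambda>i. f (x i)) ` {..k}) - f z \<le> 16 * L * Dh z (x 0) * R / (real k + 1)"
proof -
  have "(1 + real k) * (Min ((\<lambda>i. f (x i)) ` {..k}) - f z) \<le> (\<Sum>i\<le>k. f (x i) - f z)"
    using sum_mono[of "{..k}" "\<lambda>_. Min ((\<lambda>i. f (x i)) ` {..k}) - f z" "\<lambda>i. f (x i) - f z"]
    by simp
  also have "\<dots> \<le> 16 * L * Dh z (x 0) * R"
    by (rule suboptimality_sum_le)
  finally show ?thesis
    by (simp add: field_simps)
qed

lemma f_iterates_tendsto: "(\<lambda>k. f (x k)) \<longlonglongrightarrow> f z"
proof -
  have "summable (\<lambda>i. f (x i) - f z)"
    using z_min suboptimality_sum_le by (intro bounded_imp_summable) auto
  then show ?thesis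
    using summable_LIMSEQ_zero LIM_zero_iff by blast
qed

lemma iterates_converge: "\<exists>l. x \<longlonglongrightarrow> l \<and> (\<forall>i. 0 \<le> l$i) \<and> (\<forall>y. f l \<le> f y)"
proof -
  have cluster: "l \<in> {w. f w = f z}" if "strict_mono r" "(x \<circ> r) \<longlonglongrightarrow> l" for l r
  proof -
    have "isCont f l"
      using has_derivative_continuous[OF grad] by (simp add: continuous_at)
    then have "(\<lambda>j. f ((x \<circ> r) j)) \<longlonglongrightarrow> f l"
      using that(2) by (rule isCont_tendsto_compose)
    moreover have "(\<lambda>j. f ((x \<circ> r) j)) \<longlonglongrightarrow> f z"
      using LIMSEQ_subseq_LIMSEQ[OF f_iterates_tendsto that(1)] by (simp add: comp_def)
    ultimately show ?thesis
      using LIMSEQ_unique by auto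
  qed
  have Fejer: "decseq (\<lambda>k. Dh w (x k))" if "w \<in> {w. f w = f z}" "\<forall>i. 0 \<le> w$i" for w
  proof (rule decseq_SucI)
    fix k
    show "Dh w (x (Suc k)) \<le> Dh w (x k)"
      using Dh_iterate_Suc_le[of w k] progress_nonneg[of k] that by simp
  qed
  obtain l where "l \<in> {w. f w = f z}" "x \<longlonglongrightarrow> l" "\<forall>i. 0 \<le> l$i"
    using Dh_Fejer_convergent[OF bounded_iterates iterates_pos, of "{w. f w = f z}"] cluster Fejer
    by blast
  then show ?thesis
    using z_min by auto
qed

end

theorem mainTheorem9:
  fixes f :: "real^'n \<Rightarrow> real" and g :: "real^'n \<Rightarrow> real^'n"
    and L :: real and z x0 :: "real^'n" and x :: "nat \<Rightarrow> real^'n"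
  assumes conv: "convex_on UNIV f"
    and grad: "\<And>y. (f has_derivative (\<lambda>h. g y \<bullet> h)) (at y)"
    and smooth: "\<And>a b. norm (g a - g b) \<le> L * norm (a - b)"
    and z_nonneg: "\<And>i. z$i \<ge> 0"
    and z_min: "\<And>y. f z \<le> f y"
    and x0_pos: "\<And>i. x0$i > 0"
    and x_0: "x 0 = x0"
    and iter:
      "(\<forall>k. x (Suc k) = (if g (x k) = 0 then x k
              else emd_update (step_size (f (x k)) (f z) (x k) (g (x k))) (x k) (g (x k))))
     \<or> (\<forall>k. x (Suc k) = (if g (x k) = 0 then x k
              else hdp_update (step_size (f (x k)) (f z) (x k) (g (x k))) (x k) (g (x k))))"
  shows "bounded (range x)
    \<and> (\<forall>k. g (x k) \<noteq> 0 \<longrightarrow>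
          step_size (f (x k)) (f z) (x k) (g (x k)) \<ge> 1 / (8 * L * (Dh z x0 + norm1 z)))
    \<and> (\<forall>k. Min ((\<lambda>i. f (x i)) ` {..k}) - f z
          \<le> 16 * L * Dh z x0 * (Dh z x0 + norm1 z) / (real k + 1))
    \<and> (\<exists>xs. x \<longlonglongrightarrow> xs \<and> (\<forall>i. xs$i \<ge> 0) \<and> (\<forall>y. f xs \<le> f y))"
proof -
  obtain upd where upd: "admissible_update upd"
    and iter_upd: "\<And>k. x (Suc k) = (if g (x k) = 0 then x k
      else upd (step_size (f (x k)) (f z) (x k) (g (x k))) (x k) (g (x k)))"
    using iter admissible_emd_update admissible_hdp_update by blast
  interpret entropic_descent f g L z upd x
    using conv grad smooth z_nonneg z_min x0_pos upd iter_upd by unfold_locales (auto simp: x_0)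
  show ?thesis
    using bounded_iterates step_size_lower_bound min_suboptimality_le iterates_converge
    by (simp add: x_0)
qed

end
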